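(* Let $d\ge1$, let $P$ be a probability distribution on $\{0,1\}^d$ with $P(\nu)>0$ for all $\nu$, and fix $\omega\in\{0,1\}^d$. Let $A_\omega$ be the $(2^d-1)\times d$ binary matrix with rows indexed by $\nu\in\{0,1\}^d\setminus\{\omega\}$ and entries $A_\omega(\nu,i)=1$ if $\nu_i\ne\omega_i$ and $0$ otherwise, and let $b_\omega(\nu)=\ln(P(\nu)/P(\omega))$. Then the polyhedron $\{y\in\mathbb{R}^d\mid A_\omega y\le b_\omega\}$ is pointed, i.e. it contains at least one vertex.
   Context: A point $y$ of the polyhedron $\{y: A_\omega y\le b_\omega\}$ is a vertex if there is an invertible $d\times d$ submatrix $A'_\omega$ of $A_\omega$, formed by some $d$ rows, with corresponding subvector $b'_\omega$ of $b_\omega$ (same rows), such that $A'_\omega y=b'_\omega$. *)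

theory Defs
  imports "HOL-Analysis.Analysis"
begin

text \<open>Points of {0,1}^d are vectors \<open>bool ^ 'd\<close> (True = 1); the dimension d is CARD('d) \<ge> 1.
  Rows of A_omega are indexed by \<open>\<nu> \<noteq> \<omega>\<close>.\<close>

definition A_om :: "bool ^ 'd \<Rightarrow> bool ^ 'd \<Rightarrow> 'd \<Rightarrow> real" where
  "A_om \<omega> \<nu> i = (if \<nu> $ i \<noteq> \<omega> $ i then 1 else 0)"

definition b_om :: "(bool ^ 'd \<Rightarrow> real) \<Rightarrow> bool ^ 'd \<Rightarrow> bool ^ 'd \<Rightarrow> real" where
  "b_om P \<omega> \<nu> = ln (P \<nu> / P \<omega>)"

definition polyhedron_om :: "(bool ^ 'd \<Rightarrow> real) \<Rightarrow> bool ^ 'd \<Rightarrow> (real ^ 'd) set" where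
  "polyhedron_om P \<omega> = {y. \<forall>\<nu>. \<nu> \<noteq> \<omega> \<longrightarrow> (\<Sum>i\<in>UNIV. A_om \<omega> \<nu> i * y $ i) \<le> b_om P \<omega> \<nu>}"

definition is_vertex_om :: "(bool ^ 'd \<Rightarrow> real) \<Rightarrow> bool ^ 'd \<Rightarrow> real ^ 'd \<Rightarrow> bool" where
  "is_vertex_om P \<omega> y \<longleftrightarrow> y \<in> polyhedron_om P \<omega> \<and>
     (\<exists>r :: 'd \<Rightarrow> bool ^ 'd. inj r \<and> (\<forall>k. r k \<noteq> \<omega>) \<and>
        invertible ((\<chi> k i. A_om \<omega> (r k) i) :: real ^ 'd ^ 'd) \<and>
        ((\<chi> k i. A_om \<omega> (r k) i) :: real ^ 'd ^ 'd) *v y = (\<chi> k. b_om P \<omega> (r k)))"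

end

theory Submission
  imports Defs
begin

text \<open>Identifying a row \<open>\<nu> \<noteq> \<omega>\<close> with the nonempty set of coordinates where \<open>\<nu>\<close> differs
  from \<open>\<omega>\<close>, the system \<open>A\<^sub>\<omega> y \<le> b\<^sub>\<omega>\<close> reads \<open>\<Sum>i\<in>S. y i \<le> b S\<close> for all nonempty sets \<open>S\<close>
  of coordinates. Such a system has a vertex, built greedily: adding the coordinates one at a
  time, give the new coordinate \<open>k\<close> the largest value compatible with the constraints seen so
  far, which makes some constraint \<open>S \<ni> k\<close> tight. The earlier tight constraints avoid \<open>k\<close>, so the
  tight rows form a triangular system and are linearly independent.
  The hypotheses on \<open>P\<close> only make \<open>b\<^sub>\<omega>\<close> meaningful; the argument works for any right-hand side.\<close>

lemma subset_sum_feasible_extend: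
  fixes b :: "'a set \<Rightarrow> real" and y :: "'a \<Rightarrow> real"
  assumes "finite I" "k \<notin> I"
    and feasible: "\<And>S. S \<noteq> {} \<Longrightarrow> S \<subseteq> I \<Longrightarrow> sum y S \<le> b S"
  obtains S v where "k \<in> S" "S \<subseteq> insert k I" "sum (y(k := v)) S = b S"
    "\<And>T. T \<noteq> {} \<Longrightarrow> T \<subseteq> insert k I \<Longrightarrow> sum (y(k := v)) T \<le> b T"
proof -
  define C where "C = {S. k \<in> S \<and> S \<subseteq> insert k I}"
  define slack where "slack S = b S - sum y (S - {k})" for S
  define S\<^sub>k where "S\<^sub>k = arg_min_on slack C"
  define y' where "y' = y(k := slack S\<^sub>k)"
  have "C \<subseteq> Pow (insert k I)" "{k} \<in> C"
    by (auto simp: C_def)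
  then have C: "finite C" "C \<noteq> {}"
    using assms(1) finite_subset by blast+
  have S\<^sub>k: "k \<in> S\<^sub>k" "S\<^sub>k \<subseteq> insert k I"
    using arg_min_if_finite(1)[OF C] by (auto simp: S\<^sub>k_def C_def)
  have S\<^sub>k_min: "slack S\<^sub>k \<le> slack S" if "S \<in> C" for S
    using arg_min_least[OF C that] by (simp add: S\<^sub>k_def)
  have sum_y'_old: "sum y' S = sum y S" if "S \<subseteq> I" for S
    using that assms(2) by (intro sum.cong) (auto simp: y'_def)
  have sum_y'_new: "sum y' S = slack S\<^sub>k + sum y (S - {k})" if "k \<in> S" "S \<subseteq> insert k I" for S
  proof -
    have "sum y' S = y' k + sum y' (S - {k})"
      using that assms(1) by (intro sum.remove) (auto intro: finite_subset)
    also have "sum y' (S - {k}) = sum y (S - {k})"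
      using that(2) by (intro sum_y'_old) auto
    finally show ?thesis by (simp add: y'_def)
  qed
  have "sum y' T \<le> b T" if "T \<noteq> {}" "T \<subseteq> insert k I" for T
  proof (cases "k \<in> T")
    case True
    with that have "T \<in> C" by (simp add: C_def)
    with True that show ?thesis
      using S\<^sub>k_min[of T] by (simp add: sum_y'_new slack_def)
  next
    case False
    with that have "T \<subseteq> I" by blast
    with that show ?thesis by (simp add: sum_y'_old feasible)
  qed
  moreover have "sum y' S\<^sub>k = b S\<^sub>k"
    using S\<^sub>k by (simp add: sum_y'_new slack_def)
  ultimately show ?thesis
    using that S\<^sub>k by (simp add: y'_def)
qed

lemma subset_sums_independent_insert:
  fixes x :: "'a \<Rightarrow> real"
  assumes "finite S" "k \<notin> I" "k \<in> S" "S \<subseteq> insert k I" "\<forall>j\<in>I. R j \<subseteq> I"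
    and indep: "\<forall>x :: 'a \<Rightarrow> real. (\<forall>j\<in>I. sum x (R j) = 0) \<longrightarrow> (\<forall>i\<in>I. x i = 0)"
    and zero: "\<forall>j\<in>insert k I. sum x ((R(k := S)) j) = 0"
  shows "\<forall>i\<in>insert k I. x i = 0"
proof -
  have "sum x (R j) = 0" if "j \<in> I" for j
    using zero that assms(2) by (metis fun_upd_other insertI2)
  with indep have old: "\<forall>i\<in>I. x i = 0" by blast
  have "sum x S = x k + sum x (S - {k})"
    using assms(1,3) by (rule sum.remove)
  also have "sum x (S - {k}) = 0"
    using assms(4) old by (intro sum.neutral) auto
  moreover have "sum x S = 0"
    using zero by simp
  ultimately have "x k = 0" by simp
  with old show ?thesis by simp
qed

lemma subset_sum_system_vertex_exists:
  fixes b :: "'a set \<Rightarrow> real"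
  assumes "finite I"
  shows "\<exists>(y :: 'a \<Rightarrow> real) (R :: 'a \<Rightarrow> 'a set).
    (\<forall>S. S \<noteq> {} \<and> S \<subseteq> I \<longrightarrow> sum y S \<le> b S) \<and>
    (\<forall>k\<in>I. k \<in> R k \<and> R k \<subseteq> I \<and> sum y (R k) = b (R k)) \<and>
    inj_on R I \<and>
    (\<forall>x :: 'a \<Rightarrow> real. (\<forall>k\<in>I. sum x (R k) = 0) \<longrightarrow> (\<forall>i\<in>I. x i = 0))"
  using assms
proof (induction I rule: finite_induct)
  case empty
  show ?case by simp
next
  case (insert k I)
  from insert.IH obtain y R where
    feasible: "\<forall>S. S \<noteq> {} \<and> S \<subseteq> I \<longrightarrow> sum y S \<le> b S" and
    tight: "\<forall>j\<in>I. j \<in> R j \<and> R j \<subseteq> I \<and> sum y (R j) = b (R j)" and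
    inj: "inj_on R I" and
    indep: "\<forall>x :: 'a \<Rightarrow> real. (\<forall>j\<in>I. sum x (R j) = 0) \<longrightarrow> (\<forall>i\<in>I. x i = 0)"
    by blast
  obtain S v where S: "k \<in> S" "S \<subseteq> insert k I" "sum (y(k := v)) S = b S"
    and feasible': "\<And>T. T \<noteq> {} \<Longrightarrow> T \<subseteq> insert k I \<Longrightarrow> sum (y(k := v)) T \<le> b T"
    using subset_sum_feasible_extend[OF insert.hyps feasible[rule_format, OF conjI]] by blast
  have "finite S"
    using S(2) insert.hyps(1) by (meson finite_insert finite_subset)
  have R_old: "\<forall>j\<in>I. R j \<subseteq> I"
    using tight by blast
  have y_old: "sum (y(k := v)) T = sum y T" if "T \<subseteq> I" for T
    using that insert.hyps(2) by (intro sum.cong) auto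
  have "sum (y(k := v)) (R j) = b (R j)" if "j \<in> I" for j
    using tight that y_old[of "R j"] by simp
  then have tight': "\<forall>j\<in>insert k I. j \<in> (R(k := S)) j \<and> (R(k := S)) j \<subseteq> insert k I \<and>
      sum (y(k := v)) ((R(k := S)) j) = b ((R(k := S)) j)"
    using S tight insert.hyps(2) by auto
  have inj': "inj_on (R(k := S)) (insert k I)"
  proof -
    have "S \<notin> R ` I"
      using tight insert.hyps(2) S(1) by blast
    with inj insert.hyps(2) show ?thesis by (auto simp: inj_on_fun_updI)
  qed
  have indep': "\<forall>x :: 'a \<Rightarrow> real. (\<forall>j\<in>insert k I. sum x ((R(k := S)) j) = 0) \<longrightarrow>
      (\<forall>i\<in>insert k I. x i = 0)"
    using subset_sums_independent_insert[OF \<open>finite S\<close> insert.hyps(2) S(1,2) R_old indep] by blast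
  show ?case
    using feasible' tight' inj' indep' by (intro exI[of _ "y(k := v)"] exI[of _ "R(k := S)"]) blast
qed

definition disagreement :: "bool ^ 'd \<Rightarrow> bool ^ 'd \<Rightarrow> 'd set" where
  "disagreement \<omega> \<nu> = {i. \<nu> $ i \<noteq> \<omega> $ i}"

definition flip_coords :: "bool ^ 'd \<Rightarrow> 'd set \<Rightarrow> bool ^ 'd" where
  "flip_coords \<omega> S = (\<chi> i. if i \<in> S then \<not> \<omega> $ i else \<omega> $ i)"

lemma disagreement_flip_coords [simp]: "disagreement \<omega> (flip_coords \<omega> S) = S"
  by (auto simp: disagreement_def flip_coords_def)

lemma flip_coords_disagreement [simp]: "flip_coords \<omega> (disagreement \<omega> \<nu>) = \<nu>"
  by (auto simp: disagreement_def flip_coords_def vec_eq_iff)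

lemma inj_flip_coords: "inj (flip_coords \<omega>)"
  by (metis disagreement_flip_coords injI)

lemma disagreement_empty_iff: "disagreement \<omega> \<nu> = {} \<longleftrightarrow> \<nu> = \<omega>"
  by (auto simp: disagreement_def vec_eq_iff)

lemma row_A_om_dot: "(\<Sum>i\<in>UNIV. A_om \<omega> \<nu> i * y $ i) = (\<Sum>i\<in>disagreement \<omega> \<nu>. y $ i)"
proof -
  have "(\<Sum>i\<in>UNIV. A_om \<omega> \<nu> i * y $ i) = (\<Sum>i\<in>UNIV. if i \<in> disagreement \<omega> \<nu> then y $ i else 0)"
    by (intro sum.cong) (auto simp: A_om_def disagreement_def)
  then show ?thesis
    by (simp add: sum.If_cases)
qed

theorem lemma4:
  fixes P :: "bool ^ 'd \<Rightarrow> real" and \<omega> :: "bool ^ 'd"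
  assumes "\<And>\<nu>. P \<nu> > 0"
    and "(\<Sum>\<nu>\<in>UNIV. P \<nu>) = 1"
  shows "\<exists>y. is_vertex_om P \<omega> y"
proof -
  obtain y R where
    feasible: "\<forall>S. S \<noteq> {} \<longrightarrow> sum y S \<le> b_om P \<omega> (flip_coords \<omega> S)" and
    tight: "\<forall>k. k \<in> R k \<and> sum y (R k) = b_om P \<omega> (flip_coords \<omega> (R k))" and
    inj: "inj R" and
    indep: "\<forall>x :: 'd \<Rightarrow> real. (\<forall>k. sum x (R k) = 0) \<longrightarrow> (\<forall>i. x i = 0)"
    using subset_sum_system_vertex_exists[of UNIV "\<lambda>S. b_om P \<omega> (flip_coords \<omega> S)"] by auto
  define r where "r = flip_coords \<omega> \<circ> R"
  define M where "M = ((\<chi> k i. A_om \<omega> (r k) i) :: real ^ 'd ^ 'd)"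
  have M_mult: "M *v x = (\<chi> k. \<Sum>i\<in>R k. x $ i)" for x
    by (simp add: M_def matrix_vector_mult_def row_A_om_dot r_def)
  have "invertible M"
    unfolding invertible_left_inverse matrix_left_invertible_ker
    using indep by (auto simp: M_mult vec_eq_iff)
  moreover have "inj r"
    unfolding r_def using inj_flip_coords inj by (rule inj_compose)
  moreover have "r k \<noteq> \<omega>" for k
    using tight disagreement_empty_iff[of \<omega> "r k"] by (auto simp: r_def)
  moreover have "vec_lambda y \<in> polyhedron_om P \<omega>"
  proof -
    have "(\<Sum>i\<in>disagreement \<omega> \<nu>. y i) \<le> b_om P \<omega> \<nu>" if "\<nu> \<noteq> \<omega>" for \<nu>
      using feasible[rule_format, of "disagreement \<omega> \<nu>"] that by (simp add: disagreement_empty_iff)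
    then show ?thesis by (simp add: polyhedron_om_def row_A_om_dot)
  qed
  moreover have "M *v vec_lambda y = (\<chi> k. b_om P \<omega> (r k))"
    using tight by (simp add: M_mult r_def)
  ultimately show ?thesis
    unfolding is_vertex_om_def M_def by blast
qed

end
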